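(* Let $\mathcal{M}_n=\{\rho_\theta : \theta\in\Theta\}$, $\Theta\subset\mathbb{R}^n$ open, be a regular family of density matrices on $\mathbb{C}^d$ ($d<\infty$), with parameters split as $\theta=(\theta_I,\theta_N)$, $\theta_I=(\theta_1,\dots,\theta_m)$, $\theta_N=(\theta_{m+1},\dots,\theta_n)$, $m<n$. Fix a point $\theta$ and an $m\times m$ real symmetric matrix $W_I>0$. Define $$C_{\theta_I}[W_I]=\min_{\hat\Pi_I \text{ l.u. for } \theta_I}\mathrm{Tr}\big(W_I V_{\theta_I}[\hat\Pi_I]\big),\qquad C^{\mathcal{E}_\theta}_{\theta_I}[W_I]=\inf_{\hat\Pi\in\mathcal{E}_\theta}\mathrm{Tr}\big(W_I V_{\theta_I}[\hat\Pi]\big),$$ $$C^{\lim}_{\theta_I}[W_I]=\lim_{\epsilon\to0^+}C_\theta\big[W_I\oplus\epsilon I_{n-m}\big],\qquad\text{where } C_\theta[W_n]=\min_{\hat\Pi\in\mathcal{E}_\theta}\mathrm{Tr}\big(W_nV_\theta[\hat\Pi]\big)$$ for $n\times n$ weight matrices $W_n>0$, and $I_{n-m}$ is the $(n-m)\times(n-m)$ identity. Then $$C_{\theta_I}[W_I]=C^{\mathcal{E}_\theta}_{\theta_I}[W_I]=C^{\lim}_{\theta_I}[W_I].$$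
   Context: A POVM is a finite family $\Pi=\{\Pi_x\}_{x\in\mathcal{X}}$ of positive semidefinite $d\times d$ matrices summing to the identity; it gives the probability distribution $p_\theta(x\mid\Pi)=\mathrm{tr}(\rho_\theta\Pi_x)$, and $E_\theta[\,\cdot\mid\Pi]$ denotes expectation under it. A quantum estimator for all parameters is $\hat\Pi=(\Pi,\hat\theta)$ with $\hat\theta=(\hat\theta_1,\dots,\hat\theta_n)$ real functions on $\mathcal{X}$; its MSE matrix is $V_\theta[\hat\Pi]=\big[E_\theta[(\hat\theta_i(X)-\theta_i)(\hat\theta_j(X)-\theta_j)\mid\Pi]\big]_{i,j=1}^n$, and $V_{\theta_I}[\hat\Pi]$ denotes its upper-left $m\times m$ block (indices $1,\dots,m$). An estimator for the parameters of interest is $\hat\Pi_I=(\Pi,\hat\theta_I)$ with $\hat\theta_I=(\hat\theta_1,\dots,\hat\theta_m)$, with $m\times m$ MSE matrix $V_{\theta_I}[\hat\Pi_I]=\big[E_\theta[(\hat\theta_i(X)-\theta_i)(\hat\theta_j(X)-\theta_j)\mid\Pi]\big]_{i,j=1}^m$. $\hat\Pi_I$ is locally unbiased (l.u.) for $\theta_I$ at $\theta$ if $E_\theta[\hat\theta_i(X)\mid\Pi]=\theta_i$ and $\partial_{\theta_j}E_\theta[\hat\theta_i(X)\mid\Pi]=\delta_{ij}$ at $\theta$ for all $i\in\{1,\dots,m\}$, $j\in\{1,\dots,n\}$. $\mathcal{E}_\theta$ is the set of estimators $\hat\Pi=(\Pi,\hat\theta)$ that are locally unbiased for all parameters at $\theta$,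 i.e. the same two conditions hold for all $i,j\in\{1,\dots,n\}$. Regularity: the model is smooth, its derivatives $\partial_i\rho_\theta$ are linearly independent, and there exist POVMs whose classical models $\{p_\theta(\cdot\mid\Pi)\}$ are regular with linearly independent score functions $\partial_{\theta_i}\log p_\theta(x\mid\Pi)$, $i=1,\dots,n$, at $\theta$ (so that the minima above are taken over nonempty sets and are well defined). *)

theory Defs
  imports "HOL-Analysis.Analysis"
begin

definition ctrace :: "complex^'d^'d \<Rightarrow> complex" where
  "ctrace A = (\<Sum>i\<in>UNIV. A $ i $ i)"

definition cquad :: "complex^'d^'d \<Rightarrow> complex^'d \<Rightarrow> complex" where
  "cquad A v = (\<Sum>i\<in>UNIV. \<Sum>j\<in>UNIV. cnj (v $ i) * A $ i $ j * v $ j)"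

text \<open>Positive semidefinite (hence Hermitian) complex matrix.\<close>
definition psd :: "complex^'d^'d \<Rightarrow> bool" where
  "psd A \<longleftrightarrow> (\<forall>v. cquad A v \<in> \<real> \<and> 0 \<le> Re (cquad A v))"

definition density_matrix :: "complex^'d^'d \<Rightarrow> bool" where
  "density_matrix A \<longleftrightarrow> psd A \<and> ctrace A = 1"

definition is_povm :: "nat set \<Rightarrow> (nat \<Rightarrow> complex^'d^'d) \<Rightarrow> bool" where
  "is_povm X P \<longleftrightarrow> finite X \<and> (\<forall>x\<in>X. psd (P x)) \<and> (\<Sum>x\<in>X. P x) = mat 1"

definition pderiv_model ::
  "(real^'p \<Rightarrow> complex^'d^'d) \<Rightarrow> real^'p \<Rightarrow> 'p \<Rightarrow> complex^'d^'d" where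
  "pderiv_model \<rho> \<theta> j = vector_derivative (\<lambda>t. \<rho> (\<theta> + t *\<^sub>R axis j 1)) (at 0)"

definition regular_model ::
  "(real^'p) set \<Rightarrow> (real^'p \<Rightarrow> complex^'d^'d) \<Rightarrow> bool" where
  "regular_model \<Theta> \<rho> \<longleftrightarrow> open \<Theta> \<and> (\<forall>\<theta>\<in>\<Theta>. density_matrix (\<rho> \<theta>)) \<and>
     (\<exists>D. (\<forall>\<theta>\<in>\<Theta>. (\<rho> has_derivative D \<theta>) (at \<theta>)) \<and>
          (\<forall>j. continuous_on \<Theta> (\<lambda>\<theta>. D \<theta> (axis j 1)))) \<and>
     (\<forall>\<theta>\<in>\<Theta>. \<forall>c::'p \<Rightarrow> real.
        (\<Sum>j\<in>UNIV. c j *\<^sub>R pderiv_model \<rho> \<theta> j) = 0 \<longrightarrow> (\<forall>j. c j = 0))"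

definition prob ::
  "(real^'p \<Rightarrow> complex^'d^'d) \<Rightarrow> real^'p \<Rightarrow> (nat \<Rightarrow> complex^'d^'d) \<Rightarrow> nat \<Rightarrow> real" where
  "prob \<rho> \<theta> P x = Re (ctrace (\<rho> \<theta> ** P x))"

definition expect ::
  "(real^'p \<Rightarrow> complex^'d^'d) \<Rightarrow> real^'p \<Rightarrow> nat set \<Rightarrow> (nat \<Rightarrow> complex^'d^'d)
     \<Rightarrow> (nat \<Rightarrow> real) \<Rightarrow> real" where
  "expect \<rho> \<theta> X P f = (\<Sum>x\<in>X. f x * prob \<rho> \<theta> P x)"

definition regular_povm_at ::
  "(real^'p \<Rightarrow> complex^'d^'d) \<Rightarrow> real^'p \<Rightarrow> nat set \<Rightarrow> (nat \<Rightarrow> complex^'d^'d) \<Rightarrow> bool" where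
  "regular_povm_at \<rho> \<theta> X P \<longleftrightarrow> is_povm X P \<and> (\<forall>x\<in>X. 0 < prob \<rho> \<theta> P x) \<and>
     (\<forall>c::'p \<Rightarrow> real.
        (\<forall>x\<in>X. (\<Sum>j\<in>UNIV. c j *
            deriv (\<lambda>t. ln (prob \<rho> (\<theta> + t *\<^sub>R axis j 1) P x)) 0) = 0)
        \<longrightarrow> (\<forall>j. c j = 0))"

text \<open>Local unbiasedness at theta of the estimator components listed by idx
  (estimator component i estimates parameter idx i).\<close>
definition locally_unbiased ::
  "(real^'p \<Rightarrow> complex^'d^'d) \<Rightarrow> real^'p \<Rightarrow> ('q \<Rightarrow> 'p) \<Rightarrow> nat set \<Rightarrow> (nat \<Rightarrow> complex^'d^'d)
     \<Rightarrow> (nat \<Rightarrow> real^'q) \<Rightarrow> bool" where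
  "locally_unbiased \<rho> \<theta> idx X P est \<longleftrightarrow> is_povm X P \<and>
     (\<forall>i. expect \<rho> \<theta> X P (\<lambda>x. est x $ i) = \<theta> $ idx i \<and>
          (\<forall>j. ((\<lambda>t. expect \<rho> (\<theta> + t *\<^sub>R axis j 1) X P (\<lambda>x. est x $ i))
                  has_real_derivative (if j = idx i then 1 else 0)) (at 0)))"

definition mse ::
  "(real^'p \<Rightarrow> complex^'d^'d) \<Rightarrow> real^'p \<Rightarrow> ('q \<Rightarrow> 'p) \<Rightarrow> nat set \<Rightarrow> (nat \<Rightarrow> complex^'d^'d)
     \<Rightarrow> (nat \<Rightarrow> real^'q) \<Rightarrow> real^'q^'q" where
  "mse \<rho> \<theta> idx X P est = (\<chi> i j. expect \<rho> \<theta> X P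
      (\<lambda>x. (est x $ i - \<theta> $ idx i) * (est x $ j - \<theta> $ idx j)))"

definition rtrace_prod :: "real^'q^'q \<Rightarrow> real^'q^'q \<Rightarrow> real" where
  "rtrace_prod W V = (\<Sum>i\<in>UNIV. \<Sum>j\<in>UNIV. W $ i $ j * V $ j $ i)"

definition pos_def_sym :: "real^'q^'q \<Rightarrow> bool" where
  "pos_def_sym W \<longleftrightarrow> transpose W = W \<and> (\<forall>v. v \<noteq> 0 \<longrightarrow> 0 < v \<bullet> (W *v v))"

section \<open>The bounds; parameters are indexed by 'm + 'k: Inl i = theta_I, Inr j = theta_N\<close>

text \<open>C_theta[W] over estimators of all parameters that are l.u. for all parameters.\<close>
definition C_full ::
  "(real^('m::finite+'k::finite) \<Rightarrow> complex^'d^'d) \<Rightarrow> real^('m+'k) \<Rightarrow> real^('m+'k)^('m+'k) \<Rightarrow> real" where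
  "C_full \<rho> \<theta> W = Inf {rtrace_prod W (mse \<rho> \<theta> id X P est) | X P est.
       locally_unbiased \<rho> \<theta> id X P est}"

definition C_I ::
  "(real^('m::finite+'k::finite) \<Rightarrow> complex^'d^'d) \<Rightarrow> real^('m+'k) \<Rightarrow> real^'m^'m \<Rightarrow> real" where
  "C_I \<rho> \<theta> W = Inf {rtrace_prod W (mse \<rho> \<theta> Inl X P est) | X P (est :: nat \<Rightarrow> real^'m).
       locally_unbiased \<rho> \<theta> Inl X P est}"

text \<open>C^{E_theta}_{theta_I}[W_I]: estimators in E_theta, weighted only on the theta_I block.\<close>
definition C_I_E ::
  "(real^('m::finite+'k::finite) \<Rightarrow> complex^'d^'d) \<Rightarrow> real^('m+'k) \<Rightarrow> real^'m^'m \<Rightarrow> real" where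
  "C_I_E \<rho> \<theta> W = Inf {rtrace_prod W (\<chi> i j. mse \<rho> \<theta> id X P est $ Inl i $ Inl j) | X P est.
       locally_unbiased \<rho> \<theta> id X P est}"

definition dsum_eps :: "real^'m::finite^'m \<Rightarrow> real \<Rightarrow> real^('m+'k::finite)^('m+'k)" where
  "dsum_eps W \<epsilon> = (\<chi> a b. case (a, b) of
      (Inl i, Inl j) \<Rightarrow> W $ i $ j
    | (Inr i, Inr j) \<Rightarrow> (if i = j then \<epsilon> else 0)
    | _ \<Rightarrow> 0)"

end

theory Submission
  imports Defs
begin

text \<open>Restricting an estimator in E_theta to its theta_I components gives an estimator that
  is locally unbiased for theta_I with the same theta_I block of the MSE, so C_I \<le> C_I^E.
  Conversely, run an estimator locally unbiased for theta_I with probability a and one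
  locally unbiased for theta_N with probability 1 - a (one exists: theta + J^-1 s for the
  score s and Fisher information J of a regular POVM). After rescaling the deviations
  this estimator lies in E_theta, and its theta_I block is the original MSE divided by a;
  letting a tend to 1 gives C_I^E \<le> C_I. Finally the weight W \<oplus> eps I adds
  eps tr V_N \<ge> 0 to the objective, and the infimum of f + eps h with h \<ge> 0 tends to
  the infimum of f as eps tends to 0. Nonnegativity of all MSE terms rests on
  tr (A B) \<ge> 0 for positive semidefinite A and B.\<close>

lemma cquad_axis:
  fixes A :: "complex^'d^'d"
  shows "cquad A (axis k a) = cnj a * A$k$k * a"
proof -
  have "cnj (axis k a $ i) * A$i$j * axis k a $ j =
     (if j = k then if i = k then cnj a * A$i$j * a else 0 else 0)" for i j
    by (auto simp: axis_def)
  then show ?thesis unfolding cquad_def by simp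
qed

lemma cquad_axis_add_axis:
  fixes A :: "complex^'d^'d"
  assumes "k \<noteq> l"
  shows "cquad A (axis k a + axis l b) =
    cnj a * A$k$k * a + cnj a * A$k$l * b + cnj b * A$l$k * a + cnj b * A$l$l * b"
proof -
  have "cnj ((axis k a + axis l b)$i) * A$i$j * (axis k a + axis l b)$j =
       (if j = k then if i = k then cnj a * A$i$j * a else 0 else 0)
     + (if j = l then if i = k then cnj a * A$i$j * b else 0 else 0)
     + (if j = k then if i = l then cnj b * A$i$j * a else 0 else 0)
     + (if j = l then if i = l then cnj b * A$i$j * b else 0 else 0)" for i j
    using assms by (auto simp: axis_def algebra_simps)
  then show ?thesis unfolding cquad_def by (simp add: sum.distrib)
qed

lemma cquad_diff_axis:
  fixes A :: "complex^'d^'d"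
  shows "cquad A (v - axis k c) = cquad A v - cnj c * (\<Sum>j\<in>UNIV. A$k$j * v$j)
     - (\<Sum>i\<in>UNIV. cnj (v$i) * A$i$k) * c + cnj c * A$k$k * c"
proof -
  have "cnj ((v - axis k c)$i) * A$i$j * (v - axis k c)$j =
       cnj (v$i) * A$i$j * v$j - (if j = k then cnj (v$i) * A$i$j * c else 0)
     - (if i = k then cnj c * A$i$j * v$j else 0)
     + (if j = k then if i = k then cnj c * A$i$j * c else 0 else 0)" for i j
    by (auto simp: axis_def algebra_simps)
  moreover have "(\<Sum>i\<in>UNIV. \<Sum>j\<in>UNIV. if i = k then f i j else 0) = (\<Sum>j\<in>UNIV. f k j)"
    for f :: "'d \<Rightarrow> 'd \<Rightarrow> complex"
    by (subst sum.swap) simp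
  ultimately show ?thesis
    unfolding cquad_def
    by (simp add: sum.distrib sum_subtractf sum_distrib_left sum_distrib_right mult.assoc)
qed

lemma psd_diag:
  fixes A :: "complex^'d^'d"
  assumes "psd A"
  shows "A$k$k \<in> \<real>" "0 \<le> Re (A$k$k)"
  using assms[unfolded psd_def, rule_format, of "axis k 1"] by (auto simp: cquad_axis)

lemma psd_hermitian:
  fixes A :: "complex^'d^'d"
  assumes "psd A"
  shows "A$i$j = cnj (A$j$i)"
proof (cases "i = j")
  case True
  then show ?thesis using psd_diag[OF assms, of i] by (simp add: Reals_cnj_iff)
next
  case False
  have "cquad A (axis i 1 + axis j 1) \<in> \<real>" "cquad A (axis i 1 + axis j \<i>) \<in> \<real>"
    using assms psd_def by blast+
  then have "A$i$i + A$i$j + A$j$i + A$j$j \<in> \<real>"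
    and "A$i$i + \<i> * A$i$j - \<i> * A$j$i + A$j$j \<in> \<real>"
    using False by (simp_all add: cquad_axis_add_axis algebra_simps)
  moreover have "Im (A$i$i) = 0" "Im (A$j$j) = 0"
    using psd_diag[OF assms] by (auto simp: complex_is_Real_iff)
  ultimately show ?thesis by (simp add: complex_is_Real_iff complex_eq_iff)
qed

text \<open>If A$k$k = 0 but A$k$j = z \<noteq> 0, the test vector
  t z e_k + e_j gives the quadratic form 2 t |z|^2 + A$j$j,
  which is negative for a suitable t < 0.\<close>
lemma psd_zero_diag_row:
  fixes A :: "complex^'d^'d"
  assumes A: "psd A" and Akk: "A$k$k = 0"
  shows "A$k$j = 0"
proof (rule ccontr)
  define z where "z = A$k$j"
  assume "A$k$j \<noteq> 0"
  then have kj: "k \<noteq> j" and "z \<noteq> 0" using Akk z_def by auto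
  define n where "n = (cmod z)\<^sup>2"
  have n: "0 < n" using \<open>z \<noteq> 0\<close> unfolding n_def by simp
  have czz: "cnj z * z = of_real n" unfolding n_def complex_norm_square by (rule mult.commute)
  have Ajk: "A$j$k = cnj z" using psd_hermitian[OF A, of j k] z_def by simp
  define t where "t = - (Re (A$j$j) + 1) / (2 * n)"
  have "cquad A (axis k (of_real t * z) + axis j 1) = 2 * of_real t * (cnj z * z) + A$j$j"
    unfolding cquad_axis_add_axis[OF kj] Akk Ajk z_def[symmetric] by (simp add: algebra_simps)
  then have "Re (cquad A (axis k (of_real t * z) + axis j 1)) = 2 * t * n + Re (A$j$j)"
    unfolding czz by simp
  also have "\<dots> = -1" using n unfolding t_def by (simp add: field_simps)
  finally have "Re (cquad A (axis k (of_real t * z) + axis j 1)) = -1" .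
  with A show False unfolding psd_def by (metis neg_0_le_iff_le not_one_le_zero)
qed

lemma psd_schur_complement:
  fixes A :: "complex^'d^'d"
  assumes A: "psd A" and Akk: "A$k$k \<noteq> 0"
  shows "psd (\<chi> i j. A$i$j - A$i$k * A$k$j / A$k$k)"
  unfolding psd_def
proof
  fix v :: "complex^'d"
  define a where "a = A$k$k"
  have cnj_a: "cnj a = a" using psd_diag[OF A, of k] unfolding a_def by (simp add: Reals_cnj_iff)
  define s where "s = (\<Sum>j\<in>UNIV. A$k$j * v$j)"
  have s': "(\<Sum>i\<in>UNIV. cnj (v$i) * A$i$k) = cnj s"
    unfolding s_def by (simp add: psd_hermitian[OF A, of _ k] mult.commute)
  have "cquad (\<chi> i j. A$i$j - A$i$k * A$k$j / A$k$k) v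
      = cquad A v - (\<Sum>i\<in>UNIV. cnj (v$i) * A$i$k) * (\<Sum>j\<in>UNIV. A$k$j * v$j) / a"
    unfolding cquad_def a_def
    by (simp add: algebra_simps sum_subtractf sum_distrib_left sum_distrib_right sum_divide_distrib)
  also have "\<dots> = cquad A (v - axis k (s / a))"
    unfolding cquad_diff_axis s' s_def[symmetric] a_def[symmetric]
    using Akk cnj_a a_def by (simp add: field_simps)
  finally show "cquad (\<chi> i j. A$i$j - A$i$k * A$k$j / A$k$k) v \<in> \<real> \<and>
        0 \<le> Re (cquad (\<chi> i j. A$i$j - A$i$k * A$k$j / A$k$k) v)"
    using A psd_def by metis
qed

lemma ctrace_mult: "ctrace (A ** B) = (\<Sum>i\<in>UNIV. \<Sum>l\<in>UNIV. A$i$l * B$l$i)"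
  unfolding ctrace_def matrix_matrix_mult_def by simp

text \<open>Induction on the support of A: splitting off the rank-one part
  u u^* / A$k$k (with u the k-th column of A) leaves the
  Schur complement, whose support is smaller, and contributes
  u^* B u / A$k$k \<ge> 0 to the trace.\<close>
lemma trace_mult_psd_nonneg_supported:
  fixes A B :: "complex^'d^'d"
  assumes "finite S" "psd A" "psd B" "\<And>i j. A$i$j \<noteq> 0 \<Longrightarrow> i \<in> S \<and> j \<in> S"
  shows "0 \<le> Re (ctrace (A ** B))"
  using assms
proof (induction S arbitrary: A rule: finite_induct)
  case empty
  then have "A = 0" by (auto simp: vec_eq_iff)
  then show ?case by (simp add: ctrace_def)
next
  case (insert k S)
  note A = \<open>psd A\<close>
  show ?case
  proof (cases "A$k$k = 0")
    case True
    then have "A$k$j = 0" "A$j$k = 0" for j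
      using psd_zero_diag_row[OF A] psd_hermitian[OF A, of j k] by auto
    then show ?thesis using insert by blast
  next
    case False
    define a where "a = A$k$k"
    define A' where "A' = (\<chi> i j. A$i$j - A$i$k * A$k$j / A$k$k)"
    define u where "u = (\<chi> l. A$l$k)"
    have "i \<in> S \<and> j \<in> S" if "A'$i$j \<noteq> 0" for i j
    proof -
      have "i \<noteq> k" "j \<noteq> k" using that False unfolding A'_def by auto
      moreover have "A$i$j \<noteq> 0 \<or> A$i$k \<noteq> 0 \<and> A$k$j \<noteq> 0" using that unfolding A'_def by auto
      ultimately show ?thesis using insert.prems(3) by blast
    qed
    then have IH: "0 \<le> Re (ctrace (A' ** B))"
      using insert.IH psd_schur_complement[OF A False] \<open>psd B\<close> unfolding A'_def by blast
    have "(\<Sum>i\<in>UNIV. \<Sum>l\<in>UNIV. A$i$k * A$k$l / a * B$l$i) = cquad B u / a"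
      unfolding cquad_def u_def
      by (subst sum.swap) (simp add: psd_hermitian[OF A, of k] sum_divide_distrib mult_ac)
    then have "ctrace (A ** B) = ctrace (A' ** B) + cquad B u / a"
      unfolding ctrace_mult A'_def a_def by (simp add: sum_subtractf left_diff_distrib)
    moreover have "a = of_real (Re a)" "0 < Re a"
      using psd_diag[OF A, of k] False unfolding a_def
      by (auto simp: complex_is_Real_iff complex_eq_iff)
    moreover have "0 \<le> Re (cquad B u)" using \<open>psd B\<close> psd_def by blast
    ultimately show ?thesis using IH by (metis Re_divide_of_real divide_nonneg_pos plus_complex.sel(1) add_nonneg_nonneg)
  qed
qed

lemma trace_mult_psd_nonneg:
  fixes A B :: "complex^'d^'d"
  assumes "psd A" "psd B"
  shows "0 \<le> Re (ctrace (A ** B))"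
  using trace_mult_psd_nonneg_supported[of UNIV A B] assms by auto

lemma ctrace_add: "ctrace (A + B) = ctrace A + ctrace B"
  unfolding ctrace_def by (simp add: sum.distrib)

lemma ctrace_scaleR: "ctrace (c *\<^sub>R A) = of_real c * ctrace A"
  unfolding ctrace_def
  by (simp only: vector_scaleR_component) (simp add: sum_distrib_left scaleR_conv_of_real)

lemma matrix_add_rdistrib: "(A + B) ** C = A ** C + B ** (C :: 'a::semiring_1^'n^'n)"
  by (simp add: matrix_matrix_mult_def vec_eq_iff distrib_right sum.distrib)

lemma psd_scaleR:
  assumes "psd A" "0 \<le> c"
  shows "psd (c *\<^sub>R A)"
proof -
  have "cquad (c *\<^sub>R A) v = of_real c * cquad A v" for v
    unfolding cquad_def
    by (simp only: vector_scaleR_component) (simp add: sum_distrib_left scaleR_conv_of_real mult_ac)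
  then show ?thesis using assms unfolding psd_def by auto
qed

lemma sum_prob:
  assumes "is_povm X P"
  shows "(\<Sum>x\<in>X. prob \<rho> \<theta> P x) = Re (ctrace (\<rho> \<theta>))"
proof -
  have "finite X" "sum P X = mat 1" using assms unfolding is_povm_def by auto
  have "(\<Sum>x\<in>X. ctrace (\<rho> \<theta> ** P x)) = ctrace (\<rho> \<theta> ** sum P X)"
    using \<open>finite X\<close>
    by (induction X rule: finite_induct) (simp_all add: matrix_add_ldistrib ctrace_add, simp add: ctrace_def)
  then show ?thesis unfolding prob_def \<open>sum P X = mat 1\<close> by (simp flip: Re_sum)
qed

lemma prob_nonneg:
  assumes "psd (\<rho> \<theta>)" "is_povm X P" "x \<in> X"
  shows "0 \<le> prob \<rho> \<theta> P x"
  using assms trace_mult_psd_nonneg unfolding prob_def is_povm_def by blast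

lemma prob_scaleR: "prob \<rho> \<theta> (\<lambda>x. c *\<^sub>R P x) x = c * prob \<rho> \<theta> P x"
  unfolding prob_def by (simp add: scalar_matrix_assoc[symmetric] matrix_scalar_ac ctrace_scaleR)

lemma locally_unbiased_reindex:
  "locally_unbiased \<rho> \<theta> idx X P est \<Longrightarrow>
   locally_unbiased \<rho> \<theta> (idx \<circ> \<sigma>) X P (\<lambda>x. \<chi> i. est x $ \<sigma> i)"
  unfolding locally_unbiased_def by simp

lemma mse_reindex:
  "mse \<rho> \<theta> (idx \<circ> \<sigma>) X P (\<lambda>x. \<chi> i. est x $ \<sigma> i) = (\<chi> i j. mse \<rho> \<theta> idx X P est $ \<sigma> i $ \<sigma> j)"
  unfolding mse_def by simp

lemma rtrace_prod_mse:
  "rtrace_prod W (mse \<rho> \<theta> idx X P est) =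
   expect \<rho> \<theta> X P (\<lambda>x. (\<chi> i. est x $ i - \<theta> $ idx i) \<bullet> (W *v (\<chi> i. est x $ i - \<theta> $ idx i)))"
  unfolding rtrace_prod_def mse_def expect_def inner_vec_def matrix_vector_mult_def
  by (simp add: sum_distrib_left sum_distrib_right mult_ac sum.swap[of _ X])

lemma rtrace_prod_mse_nonneg:
  assumes "\<And>v. 0 \<le> v \<bullet> (W *v v)" and "\<And>x. x \<in> X \<Longrightarrow> 0 \<le> prob \<rho> \<theta> P x"
  shows "0 \<le> rtrace_prod W (mse \<rho> \<theta> idx X P est)"
  unfolding rtrace_prod_mse expect_def by (simp add: assms sum_nonneg)

lemma mse_diag_nonneg:
  assumes "\<And>x. x \<in> X \<Longrightarrow> 0 \<le> prob \<rho> \<theta> P x"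
  shows "0 \<le> mse \<rho> \<theta> idx X P est $ a $ a"
  unfolding mse_def expect_def by (simp add: assms sum_nonneg)

lemma pos_def_sym_nonneg: "pos_def_sym W \<Longrightarrow> 0 \<le> v \<bullet> (W *v v)"
  unfolding pos_def_sym_def by (cases "v = 0") (auto intro: less_imp_le)

lemma rtrace_prod_scaleR: "rtrace_prod W (c *\<^sub>R V) = c * rtrace_prod W V"
  unfolding rtrace_prod_def by (simp add: sum_distrib_left mult_ac)

lemma rtrace_prod_dsum_eps:
  fixes W :: "real^'m::finite^'m" and V :: "real^('m+'k::finite)^('m+'k)"
  shows "rtrace_prod (dsum_eps W \<epsilon>) V
     = rtrace_prod W (\<chi> i j. V $ Inl i $ Inl j) + \<epsilon> * (\<Sum>j\<in>UNIV. V $ Inr j $ Inr j)"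
proof -
  have "sum f (UNIV :: ('m+'k) set) = (\<Sum>i\<in>UNIV. f (Inl i)) + (\<Sum>j\<in>UNIV. f (Inr j))"
    for f :: "'m+'k \<Rightarrow> real"
    using sum.Plus[of UNIV UNIV f] by simp
  then show ?thesis
    unfolding rtrace_prod_def dsum_eps_def by (simp add: if_distrib if_distribR sum_distrib_left cong: if_cong)
qed

text \<open>With P = interleave (a P1) ((1 - a) P2) on interleave_outcomes X1 X2 one measures P1
  with probability a and P2 with probability 1 - a, the parity of the outcome recording
  which of the two was performed.\<close>
definition interleave :: "(nat \<Rightarrow> 'a) \<Rightarrow> (nat \<Rightarrow> 'a) \<Rightarrow> nat \<Rightarrow> 'a" where
  "interleave f g y = (if even y then f (y div 2) else g (y div 2))"

definition interleave_outcomes :: "nat set \<Rightarrow> nat set \<Rightarrow> nat set" where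
  "interleave_outcomes X1 X2 = (\<lambda>x. 2 * x) ` X1 \<union> (\<lambda>x. 2 * x + 1) ` X2"

lemma interleave_even [simp]: "interleave f g (2 * x) = f x"
  and interleave_odd [simp]: "interleave f g (Suc (2 * x)) = g x"
  unfolding interleave_def by simp_all

lemma sum_interleave_outcomes:
  assumes "finite X1" "finite X2"
  shows "sum h (interleave_outcomes X1 X2) = (\<Sum>x\<in>X1. h (2 * x)) + (\<Sum>x\<in>X2. h (2 * x + 1))"
proof -
  have "(\<lambda>x. 2 * x) ` X1 \<inter> (\<lambda>x. 2 * x + 1) ` X2 = {}" by auto presburger
  then show ?thesis
    using assms unfolding interleave_outcomes_def
    by (simp add: sum.union_disjoint sum.reindex inj_on_def)
qed

lemma is_povm_interleave:
  assumes "is_povm X1 P1" "is_povm X2 P2" "0 \<le> a" "0 \<le> b" "a + b = 1"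
  shows "is_povm (interleave_outcomes X1 X2) (interleave (\<lambda>x. a *\<^sub>R P1 x) (\<lambda>x. b *\<^sub>R P2 x))"
proof -
  have "finite X1" "finite X2" "sum P1 X1 = mat 1" "sum P2 X2 = mat 1"
    using assms(1,2) unfolding is_povm_def by auto
  then have "sum (interleave (\<lambda>x. a *\<^sub>R P1 x) (\<lambda>x. b *\<^sub>R P2 x)) (interleave_outcomes X1 X2) = mat 1"
    using assms(5) by (simp add: sum_interleave_outcomes flip: scaleR_sum_right scaleR_add_left)
  moreover have "psd (interleave (\<lambda>x. a *\<^sub>R P1 x) (\<lambda>x. b *\<^sub>R P2 x) y)"
    if "y \<in> interleave_outcomes X1 X2" for y
    using that assms unfolding interleave_outcomes_def is_povm_def by (auto simp: psd_scaleR)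
  ultimately show ?thesis
    using \<open>finite X1\<close> \<open>finite X2\<close> unfolding is_povm_def interleave_outcomes_def by auto
qed

lemma expect_interleave:
  assumes "finite X1" "finite X2"
  shows "expect \<rho> \<theta> (interleave_outcomes X1 X2) (interleave (\<lambda>x. a *\<^sub>R P1 x) (\<lambda>x. b *\<^sub>R P2 x)) f
       = a * expect \<rho> \<theta> X1 P1 (\<lambda>x. f (2 * x)) + b * expect \<rho> \<theta> X2 P2 (\<lambda>x. f (2 * x + 1))"
proof -
  have "prob \<rho> \<theta> (interleave (\<lambda>x. a *\<^sub>R P1 x) (\<lambda>x. b *\<^sub>R P2 x)) (2 * x) = a * prob \<rho> \<theta> P1 x"
    and "prob \<rho> \<theta> (interleave (\<lambda>x. a *\<^sub>R P1 x) (\<lambda>x. b *\<^sub>R P2 x)) (2 * x + 1) = b * prob \<rho> \<theta> P2 x"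
    for x
    using prob_scaleR[of \<rho> \<theta> a P1 x] prob_scaleR[of \<rho> \<theta> b P2 x] by (simp_all add: prob_def)
  then show ?thesis
    unfolding expect_def sum_interleave_outcomes[OF assms] by (simp add: sum_distrib_left mult_ac)
qed

lemma expect_stretch:
  "expect \<rho> \<theta> X P (\<lambda>x. c + (f x - c) / a) =
   c * (\<Sum>x\<in>X. prob \<rho> \<theta> P x) + (expect \<rho> \<theta> X P f - c * (\<Sum>x\<in>X. prob \<rho> \<theta> P x)) / a"
  unfolding expect_def
  by (simp add: sum.distrib sum_distrib_left ring_distribs sum_subtractf diff_divide_distrib
      sum_divide_distrib)

lemma expect_const: "expect \<rho> \<theta> X P (\<lambda>x. c) = c * (\<Sum>x\<in>X. prob \<rho> \<theta> P x)"
  unfolding expect_def by (simp add: sum_distrib_left)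

lemma locally_unbiased_interleave:
  fixes \<rho> :: "real^('m::finite + 'k::finite) \<Rightarrow> complex^'d::finite^'d"
    and e1 :: "nat \<Rightarrow> real^'m" and e2 :: "nat \<Rightarrow> real^'k"
  assumes lu1: "locally_unbiased \<rho> \<theta> Inl X1 P1 e1"
    and lu2: "locally_unbiased \<rho> \<theta> Inr X2 P2 e2"
    and a: "0 < a" "a < 1"
  defines "X \<equiv> interleave_outcomes X1 X2"
    and "P \<equiv> interleave (\<lambda>x. a *\<^sub>R P1 x) (\<lambda>x. (1 - a) *\<^sub>R P2 x)"
    and "est \<equiv> interleave
      (\<lambda>x. \<chi> c. case c of Inl i \<Rightarrow> \<theta> $ Inl i + (e1 x $ i - \<theta> $ Inl i) / a | Inr j \<Rightarrow> \<theta> $ Inr j)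
      (\<lambda>x. \<chi> c. case c of Inl i \<Rightarrow> \<theta> $ Inl i | Inr j \<Rightarrow> \<theta> $ Inr j + (e2 x $ j - \<theta> $ Inr j) / (1 - a))"
  shows "locally_unbiased \<rho> \<theta> id X P est"
    and "(\<chi> i j. mse \<rho> \<theta> id X P est $ Inl i $ Inl j) = (1 / a) *\<^sub>R mse \<rho> \<theta> Inl X1 P1 e1"
proof -
  have pv1: "is_povm X1 P1" and pv2: "is_povm X2 P2"
    using lu1 lu2 unfolding locally_unbiased_def by auto
  then have fin: "finite X1" "finite X2" unfolding is_povm_def by auto
  have T: "(\<Sum>x\<in>X1. prob \<rho> \<theta>' P1 x) = (\<Sum>x\<in>X2. prob \<rho> \<theta>' P2 x)" for \<theta>'
    by (simp add: sum_prob[OF pv1] sum_prob[OF pv2])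
  have expect_est: "expect \<rho> \<theta>' X P (\<lambda>y. est y $ c) = (case c of
      Inl i \<Rightarrow> expect \<rho> \<theta>' X1 P1 (\<lambda>x. e1 x $ i) | Inr j \<Rightarrow> expect \<rho> \<theta>' X2 P2 (\<lambda>x. e2 x $ j))"
    for \<theta>' c
    using a T[of \<theta>'] unfolding X_def P_def est_def expect_interleave[OF fin]
    by (cases c; simp add: expect_stretch expect_const; simp add: field_simps)
  have "is_povm X P"
    unfolding X_def P_def using is_povm_interleave[OF pv1 pv2] a by simp
  moreover have "expect \<rho> \<theta> X P (\<lambda>x. est x $ c) = \<theta> $ id c \<and>
    (\<forall>j. ((\<lambda>t. expect \<rho> (\<theta> + t *\<^sub>R axis j 1) X P (\<lambda>x. est x $ c))
       has_real_derivative (if j = id c then 1 else 0)) (at 0))" for c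
    using lu1 lu2 unfolding locally_unbiased_def expect_est by (cases c) auto
  ultimately show "locally_unbiased \<rho> \<theta> id X P est"
    unfolding locally_unbiased_def by blast
  have "mse \<rho> \<theta> id X P est $ Inl i $ Inl j = mse \<rho> \<theta> Inl X1 P1 e1 $ i $ j / a" for i j
    using a unfolding mse_def X_def P_def est_def expect_interleave[OF fin]
    by (simp add: expect_def) (simp add: power2_eq_square flip: sum_divide_distrib)
  then show "(\<chi> i j. mse \<rho> \<theta> id X P est $ Inl i $ Inl j) = (1 / a) *\<^sub>R mse \<rho> \<theta> Inl X1 P1 e1"
    by (simp add: vec_eq_iff)
qed

lemma bounded_linear_trace_mult: "bounded_linear (\<lambda>M::complex^'d^'d. Re (ctrace (M ** Q)))"
proof -
  have "linear (\<lambda>M::complex^'d^'d. Re (ctrace (M ** Q)))"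
    by (rule linearI)
      (simp_all add: matrix_add_rdistrib ctrace_add ctrace_scaleR flip: scalar_matrix_assoc)
  then show ?thesis by (simp add: linear_conv_bounded_linear)
qed

lemma regular_model_density_matrix:
  assumes "regular_model \<Theta> \<rho>" "\<theta> \<in> \<Theta>"
  shows "density_matrix (\<rho> \<theta>)"
proof -
  have "\<forall>\<theta>\<in>\<Theta>. density_matrix (\<rho> \<theta>)"
    using assms(1) unfolding regular_model_def by (rule conjunct1[OF conjunct2])
  then show ?thesis using assms(2) ..
qed

lemma prob_line_differentiable:
  assumes "regular_model \<Theta> \<rho>" "\<theta> \<in> \<Theta>"
  shows "(\<lambda>t. prob \<rho> (\<theta> + t *\<^sub>R axis j 1) P x) differentiable (at 0)"
proof -
  obtain D where "\<forall>\<theta>\<in>\<Theta>. (\<rho> has_derivative D \<theta>) (at \<theta>)"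
    using assms(1) unfolding regular_model_def by blast
  then have "(\<rho> has_derivative D \<theta>) (at ((\<lambda>t::real. \<theta> + t *\<^sub>R axis j 1) 0))"
    using assms(2) by simp
  then have "((\<lambda>t. \<rho> (\<theta> + t *\<^sub>R axis j 1)) has_derivative (\<lambda>t. D \<theta> (t *\<^sub>R axis j 1))) (at 0)"
    by (rule has_derivative_compose[rotated]) (auto intro!: derivative_eq_intros)
  from bounded_linear.has_derivative[OF bounded_linear_trace_mult this]
  show ?thesis unfolding prob_def by (rule differentiableI)
qed

lemma sum_prob_line_deriv_eq_0:
  assumes "regular_model \<Theta> \<rho>" "\<theta> \<in> \<Theta>" "is_povm X P"
  shows "(\<Sum>x\<in>X. deriv (\<lambda>t. prob \<rho> (\<theta> + t *\<^sub>R axis j 1) P x) 0) = 0"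
proof -
  have "((\<lambda>t. \<Sum>x\<in>X. prob \<rho> (\<theta> + t *\<^sub>R axis j 1) P x) has_real_derivative
      (\<Sum>x\<in>X. deriv (\<lambda>t. prob \<rho> (\<theta> + t *\<^sub>R axis j 1) P x) 0)) (at 0)"
    using prob_line_differentiable[OF assms(1,2)]
    by (intro DERIV_sum) (simp add: DERIV_deriv_iff_real_differentiable)
  moreover have "((\<lambda>t. \<Sum>x\<in>X. prob \<rho> (\<theta> + t *\<^sub>R axis j 1) P x) has_real_derivative 0) (at 0)"
  proof (rule DERIV_cong_ev[OF refl _ refl, THEN iffD2, OF _ DERIV_const])
    have "open \<Theta>" using assms(1) unfolding regular_model_def by (rule conjunct1)
    then obtain r where r: "0 < r" "ball \<theta> r \<subseteq> \<Theta>"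
      using assms(2) open_contains_ball by blast
    have "\<forall>\<^sub>F t in nhds 0. t \<in> ball (0::real) r"
      using r by (intro eventually_nhds_in_open) auto
    then show "\<forall>\<^sub>F t in nhds 0. (\<Sum>x\<in>X. prob \<rho> (\<theta> + t *\<^sub>R axis j 1) P x) = 1"
    proof (rule eventually_mono)
      fix t :: real
      assume "t \<in> ball 0 r"
      then have "\<theta> + t *\<^sub>R axis j 1 \<in> \<Theta>"
        using r by (auto simp: dist_norm norm_axis_1 subset_iff)
      then have "density_matrix (\<rho> (\<theta> + t *\<^sub>R axis j 1))"
        by (rule regular_model_density_matrix[OF assms(1)])
      then show "(\<Sum>x\<in>X. prob \<rho> (\<theta> + t *\<^sub>R axis j 1) P x) = 1"
        unfolding sum_prob[OF assms(3)] density_matrix_def by simp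
    qed
  qed
  ultimately show ?thesis by (rule DERIV_unique)
qed

lemma sum_affine_combination_mult:
  fixes a :: "'a::comm_semiring_0"
  shows "(\<Sum>x\<in>X. (a + (\<Sum>k\<in>K. c k * f k x)) * g x) =
   a * sum g X + (\<Sum>k\<in>K. c k * (\<Sum>x\<in>X. f k x * g x))"
proof -
  have "(a + (\<Sum>k\<in>K. c k * f k x)) * g x = a * g x + (\<Sum>k\<in>K. c k * (f k x * g x))" for x
    by (simp add: distrib_right sum_distrib_right mult.assoc)
  then have "(\<Sum>x\<in>X. (a + (\<Sum>k\<in>K. c k * f k x)) * g x) =
      a * sum g X + (\<Sum>x\<in>X. \<Sum>k\<in>K. c k * (f k x * g x))"
    by (simp add: sum.distrib sum_distrib_left)
  then show ?thesis by (simp add: sum.swap[of _ X] sum_distrib_left)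
qed

lemma weighted_gram_left_invertible:
  fixes s :: "'p::finite \<Rightarrow> 'x \<Rightarrow> real"
  assumes "finite X" and pos: "\<And>x. x \<in> X \<Longrightarrow> 0 < p x"
    and indep: "\<And>c. \<forall>x\<in>X. (\<Sum>j\<in>UNIV. c j * s j x) = 0 \<Longrightarrow> \<forall>j. c j = 0"
  shows "\<exists>K. K ** (\<chi> j k. \<Sum>x\<in>X. p x * s j x * s k x) = mat 1"
proof -
  define G :: "real^'p^'p" where "G = (\<chi> j k. \<Sum>x\<in>X. p x * s j x * s k x)"
  have kernel: "v = 0" if "G *v v = 0" for v
  proof -
    define u where "u x = (\<Sum>j\<in>UNIV. v$j * s j x)" for x
    have "v \<bullet> (G *v v) = (\<Sum>x\<in>X. p x * (u x)\<^sup>2)"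
      unfolding G_def inner_vec_def matrix_vector_mult_def u_def power2_eq_square sum_product
      by (simp add: sum_distrib_left mult_ac sum.swap[of _ X])
    then have "(\<Sum>x\<in>X. p x * (u x)\<^sup>2) = 0" using that by simp
    moreover have "0 \<le> p x * (u x)\<^sup>2" if "x \<in> X" for x
      using pos[OF that] by simp
    ultimately have zero: "p x * (u x)\<^sup>2 = 0" if "x \<in> X" for x
      using sum_nonneg_eq_0_iff[OF \<open>finite X\<close>, of "\<lambda>x. p x * (u x)\<^sup>2"] that by blast
    have "u x = 0" if "x \<in> X" for x
      using zero[OF that] pos[OF that] by simp
    then show "v = 0" using indep[of "\<lambda>j. v$j"] unfolding u_def by (simp add: vec_eq_iff)
  qed
  have "inj ((*v) G)"
  proof (rule injI)
    fix v w
    assume "G *v v = G *v w"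
    then have "G *v (v - w) = 0" by (simp add: matrix_vector_mult_diff_distrib)
    then show "v = w" using kernel[of "v - w"] by simp
  qed
  then show ?thesis unfolding G_def[symmetric] using matrix_left_invertible_injective by blast
qed

lemma exists_locally_unbiased:
  fixes \<rho> :: "real^'p::finite \<Rightarrow> complex^'d::finite^'d"
  assumes rm: "regular_model \<Theta> \<rho>" and "\<theta> \<in> \<Theta>" and "regular_povm_at \<rho> \<theta> X P"
  shows "\<exists>est. locally_unbiased \<rho> \<theta> id X P est"
proof -
  define p where "p x = prob \<rho> \<theta> P x" for x
  define d where "d j x = deriv (\<lambda>t. prob \<rho> (\<theta> + t *\<^sub>R axis j 1) P x) 0" for j x
  define s where "s j x = deriv (\<lambda>t. ln (prob \<rho> (\<theta> + t *\<^sub>R axis j 1) P x)) 0" for j x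
  have pv: "is_povm X P" and pos: "\<And>x. x \<in> X \<Longrightarrow> 0 < p x"
    and indep: "\<And>c. \<forall>x\<in>X. (\<Sum>j\<in>UNIV. c j * s j x) = 0 \<Longrightarrow> \<forall>j. c j = 0"
    using assms(3) unfolding regular_povm_at_def p_def s_def by blast+
  have "finite X" using pv unfolding is_povm_def by blast
  have d: "((\<lambda>t. prob \<rho> (\<theta> + t *\<^sub>R axis j 1) P x) has_real_derivative d j x) (at 0)" for j x
    unfolding d_def DERIV_deriv_iff_real_differentiable by (rule prob_line_differentiable[OF rm \<open>\<theta> \<in> \<Theta>\<close>])
  have score: "d j x = p x * s j x" if "x \<in> X" for j x
  proof -
    have "(ln has_real_derivative 1 / p x) (at (prob \<rho> (\<theta> + 0 *\<^sub>R axis j 1) P x))"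
      using DERIV_ln_divide[OF pos[OF that]] unfolding p_def by simp
    from DERIV_chain2[OF this d]
    have "((\<lambda>t. ln (prob \<rho> (\<theta> + t *\<^sub>R axis j 1) P x)) has_real_derivative d j x / p x) (at 0)"
      by simp
    then show ?thesis unfolding s_def using pos[OF that] by (simp add: DERIV_imp_deriv p_def)
  qed
  have sum_d: "(\<Sum>x\<in>X. d j x) = 0" for j
    unfolding d_def by (rule sum_prob_line_deriv_eq_0[OF rm \<open>\<theta> \<in> \<Theta>\<close> pv])
  have "density_matrix (\<rho> \<theta>)" by (rule regular_model_density_matrix[OF rm \<open>\<theta> \<in> \<Theta>\<close>])
  then have sum_p: "(\<Sum>x\<in>X. p x) = 1" unfolding p_def sum_prob[OF pv] density_matrix_def by simp
  define J :: "real^'p^'p" where "J = (\<chi> j k. \<Sum>x\<in>X. p x * s j x * s k x)"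
  obtain K where K: "K ** J = mat 1"
    using weighted_gram_left_invertible[OF \<open>finite X\<close>, of p s] pos indep unfolding J_def by blast
  define est where "est x = (\<chi> i. \<theta>$i + (\<Sum>k\<in>UNIV. K$i$k * s k x))" for x
  have sum_sp: "(\<Sum>x\<in>X. s k x * p x) = 0" for k
  proof -
    have "(\<Sum>x\<in>X. s k x * p x) = (\<Sum>x\<in>X. d k x)"
      by (rule sum.cong) (simp_all add: score mult.commute)
    then show ?thesis using sum_d by simp
  qed
  have "expect \<rho> \<theta> X P (\<lambda>x. est x $ i) = \<theta> $ i" for i
    unfolding expect_def est_def p_def[symmetric]
    by (simp add: sum_affine_combination_mult sum_p sum_sp)
  moreover have "((\<lambda>t. expect \<rho> (\<theta> + t *\<^sub>R axis j 1) X P (\<lambda>x. est x $ i)) has_real_derivative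
      (if j = i then 1 else 0)) (at 0)" for i j
  proof -
    have "(\<Sum>x\<in>X. s k x * d j x) = J $ k $ j" for k
      unfolding J_def by (simp add: score mult_ac cong: sum.cong)
    then have "(\<Sum>x\<in>X. est x $ i * d j x) = (K ** J) $ i $ j"
      unfolding est_def matrix_matrix_mult_def by (simp add: sum_affine_combination_mult sum_d)
    then have "(\<Sum>x\<in>X. est x $ i * d j x) = (if j = i then 1 else 0)"
      using K by (simp add: mat_def)
    moreover have "((\<lambda>t. \<Sum>x\<in>X. est x $ i * prob \<rho> (\<theta> + t *\<^sub>R axis j 1) P x)
        has_real_derivative (\<Sum>x\<in>X. est x $ i * d j x)) (at 0)"
      by (intro DERIV_sum DERIV_cmult d)
    ultimately show ?thesis unfolding expect_def by simp
  qed
  ultimately have "locally_unbiased \<rho> \<theta> id X P est" using pv unfolding locally_unbiased_def by simp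
  then show ?thesis by blast
qed

lemma tendsto_INF_add_scaled:
  fixes f h :: "'a \<Rightarrow> real"
  assumes S: "S \<noteq> {}" and bdd: "bdd_below (f ` S)" and h: "\<And>s. s \<in> S \<Longrightarrow> 0 \<le> h s"
  shows "((\<lambda>\<epsilon>. INF s\<in>S. f s + \<epsilon> * h s) \<longlongrightarrow> (INF s\<in>S. f s)) (at_right 0)"
proof (rule order_tendstoI)
  have le: "(INF s\<in>S. f s) \<le> f s + \<epsilon> * h s" if "s \<in> S" "0 \<le> \<epsilon>" for s \<epsilon>
    using cINF_lower[OF bdd that(1)] h[OF that(1)] that(2) by (simp add: add_increasing2)
  then have lower: "(INF s\<in>S. f s) \<le> (INF s\<in>S. f s + \<epsilon> * h s)" if "0 \<le> \<epsilon>" for \<epsilon>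
    using that by (intro cINF_greatest[OF S])
  show "\<forall>\<^sub>F \<epsilon> in at_right 0. y < (INF s\<in>S. f s + \<epsilon> * h s)" if "y < (INF s\<in>S. f s)" for y
    using eventually_at_right_less[of 0] by eventually_elim (rule less_le_trans[OF that lower], simp)
  show "\<forall>\<^sub>F \<epsilon> in at_right 0. (INF s\<in>S. f s + \<epsilon> * h s) < y" if "(INF s\<in>S. f s) < y" for y
  proof -
    obtain s where s: "s \<in> S" "f s < y" using \<open>(INF s\<in>S. f s) < y\<close> cINF_less_iff[OF S bdd] by blast
    have "((\<lambda>\<epsilon>. f s + \<epsilon> * h s) \<longlongrightarrow> f s + 0 * h s) (at_right 0)"
      by (intro tendsto_intros)
    then have "\<forall>\<^sub>F \<epsilon> in at_right 0. f s + \<epsilon> * h s < y" using s(2) by (simp add: order_tendstoD)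
    with eventually_at_right_less[of 0] show ?thesis
    proof eventually_elim
      case (elim \<epsilon>)
      have "bdd_below ((\<lambda>s. f s + \<epsilon> * h s) ` S)"
        using le elim(1) by (intro bdd_belowI2[where m = "INF s\<in>S. f s"]) auto
      then show ?case using cINF_lower[OF _ s(1)] elim(2) by (meson le_less_trans)
    qed
  qed
qed

definition lu_estimators ::
  "(real^'p \<Rightarrow> complex^'d^'d) \<Rightarrow> real^'p \<Rightarrow> ('q \<Rightarrow> 'p)
     \<Rightarrow> (nat set \<times> (nat \<Rightarrow> complex^'d^'d) \<times> (nat \<Rightarrow> real^'q)) set" where
  "lu_estimators \<rho> \<theta> idx = {(X, P, est). locally_unbiased \<rho> \<theta> idx X P est}"

lemma C_full_eq_INF:
  "C_full \<rho> \<theta> W = (INF (X, P, est)\<in>lu_estimators \<rho> \<theta> id. rtrace_prod W (mse \<rho> \<theta> id X P est))"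
  unfolding C_full_def lu_estimators_def by (rule arg_cong[where f = Inf]) force

lemma C_I_eq_INF:
  "C_I \<rho> \<theta> W = (INF (X, P, est)\<in>lu_estimators \<rho> \<theta> Inl. rtrace_prod W (mse \<rho> \<theta> Inl X P est))"
  unfolding C_I_def lu_estimators_def by (rule arg_cong[where f = Inf]) force

lemma C_I_E_eq_INF:
  "C_I_E \<rho> \<theta> W = (INF (X, P, est)\<in>lu_estimators \<rho> \<theta> id.
     rtrace_prod W (\<chi> i j. mse \<rho> \<theta> id X P est $ Inl i $ Inl j))"
  unfolding C_I_E_def lu_estimators_def by (rule arg_cong[where f = Inf]) force

lemma locally_unbiased_prob_nonneg:
  "psd (\<rho> \<theta>) \<Longrightarrow> locally_unbiased \<rho> \<theta> idx X P est \<Longrightarrow> x \<in> X \<Longrightarrow> 0 \<le> prob \<rho> \<theta> P x"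
  unfolding locally_unbiased_def using prob_nonneg by blast

lemma locally_unbiased_rtrace_mse_nonneg:
  assumes "psd (\<rho> \<theta>)" "pos_def_sym W" "locally_unbiased \<rho> \<theta> idx X P est"
  shows "0 \<le> rtrace_prod W (mse \<rho> \<theta> idx X P est)"
  using assms by (intro rtrace_prod_mse_nonneg pos_def_sym_nonneg locally_unbiased_prob_nonneg)

lemma locally_unbiased_rtrace_mse_block_nonneg:
  assumes "psd (\<rho> \<theta>)" "pos_def_sym W" "locally_unbiased \<rho> \<theta> id X P est"
  shows "0 \<le> rtrace_prod W (\<chi> i j. mse \<rho> \<theta> id X P est $ Inl i $ Inl j)"
  using locally_unbiased_rtrace_mse_nonneg[OF assms(1,2) locally_unbiased_reindex[OF assms(3), of Inl]]
  by (simp add: mse_reindex[of _ _ id Inl, simplified])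

lemma locally_unbiased_restrict:
  "locally_unbiased \<rho> \<theta> id X P est \<Longrightarrow>
   (X, P, \<lambda>x. \<chi> i. est x $ \<sigma> i) \<in> lu_estimators \<rho> \<theta> \<sigma>"
  using locally_unbiased_reindex[of \<rho> \<theta> id X P est \<sigma>] unfolding lu_estimators_def by simp

lemma C_I_le_C_I_E:
  fixes \<rho> :: "real^('m::finite + 'k::finite) \<Rightarrow> complex^'d::finite^'d" and W :: "real^'m^'m"
  assumes \<rho>: "psd (\<rho> \<theta>)" and nonempty: "lu_estimators \<rho> \<theta> id \<noteq> {}" and W: "pos_def_sym W"
  shows "C_I \<rho> \<theta> W \<le> C_I_E \<rho> \<theta> W"
proof -
  define fI where "fI = (\<lambda>(X, P, est). rtrace_prod W (mse \<rho> \<theta> Inl X P est))"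
  define fE where "fE = (\<lambda>(X, P, est). rtrace_prod W (\<chi> i j. mse \<rho> \<theta> id X P est $ Inl i $ Inl j))"
  have "fE e = fI (X, P, \<lambda>x. \<chi> i. est x $ Inl i)" if "e = (X, P, est)" for e X P est
    unfolding that fE_def fI_def using mse_reindex[of \<rho> \<theta> id Inl] by simp
  then have "fE ` lu_estimators \<rho> \<theta> id \<subseteq> fI ` lu_estimators \<rho> \<theta> Inl"
    using locally_unbiased_restrict[of \<rho> \<theta> _ _ _ Inl] by (force simp: lu_estimators_def)
  moreover have "bdd_below (fI ` lu_estimators \<rho> \<theta> Inl)"
    using locally_unbiased_rtrace_mse_nonneg[of \<rho> \<theta>, OF \<rho> W]
    unfolding fI_def lu_estimators_def by (intro bdd_belowI2[where m = 0]) auto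
  ultimately show ?thesis
    unfolding C_I_E_eq_INF C_I_eq_INF fI_def[symmetric] fE_def[symmetric]
    using nonempty by (intro cInf_superset_mono) auto
qed

lemma C_I_E_le_C_I:
  fixes \<rho> :: "real^('m::finite + 'k::finite) \<Rightarrow> complex^'d::finite^'d" and W :: "real^'m^'m"
  assumes \<rho>: "psd (\<rho> \<theta>)" and nonempty: "lu_estimators \<rho> \<theta> id \<noteq> {}" and W: "pos_def_sym W"
  shows "C_I_E \<rho> \<theta> W \<le> C_I \<rho> \<theta> W"
proof -
  define fE where "fE = (\<lambda>(X, P, est). rtrace_prod W (\<chi> i j. mse \<rho> \<theta> id X P est $ Inl i $ Inl j))"
  obtain X0 P0 e0 where "locally_unbiased \<rho> \<theta> id X0 P0 e0"
    using nonempty unfolding lu_estimators_def by auto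
  then have lu0: "locally_unbiased \<rho> \<theta> Inr X0 P0 (\<lambda>x. \<chi> j. e0 x $ Inr j)"
    and nonempty_I: "lu_estimators \<rho> \<theta> Inl \<noteq> {}"
    using locally_unbiased_restrict unfolding lu_estimators_def by fast+
  have bdd: "bdd_below (fE ` lu_estimators \<rho> \<theta> id)"
    using locally_unbiased_rtrace_mse_block_nonneg[of \<rho> \<theta>, OF \<rho> W]
    unfolding fE_def lu_estimators_def by (intro bdd_belowI2[where m = 0]) auto
  have "Inf (fE ` lu_estimators \<rho> \<theta> id) \<le> rtrace_prod W (mse \<rho> \<theta> Inl X1 P1 e1)"
    if lu1: "locally_unbiased \<rho> \<theta> Inl X1 P1 e1" for X1 P1 e1
  proof (rule tendsto_lowerbound)
    have scaled: "rtrace_prod W (mse \<rho> \<theta> Inl X1 P1 e1) / a \<in> fE ` lu_estimators \<rho> \<theta> id"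
      if a: "0 < a" "a < 1" for a
    proof -
      obtain X P est where "(X, P, est) \<in> lu_estimators \<rho> \<theta> id"
        and "(\<chi> i j. mse \<rho> \<theta> id X P est $ Inl i $ Inl j) = (1 / a) *\<^sub>R mse \<rho> \<theta> Inl X1 P1 e1"
        using locally_unbiased_interleave[OF lu1 lu0 a] unfolding lu_estimators_def by blast
      then show ?thesis unfolding fE_def by (force simp: rtrace_prod_scaleR)
    qed
    show "\<forall>\<^sub>F a in at_left 1.
        Inf (fE ` lu_estimators \<rho> \<theta> id) \<le> rtrace_prod W (mse \<rho> \<theta> Inl X1 P1 e1) / a"
      using eventually_at_left_real[OF zero_less_one]
      by eventually_elim (auto intro: cInf_lower scaled bdd)
  qed (auto intro!: tendsto_eq_intros)
  then show ?thesis
    unfolding C_I_E_eq_INF C_I_eq_INF fE_def[symmetric]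
    using nonempty_I by (intro cINF_greatest) (auto simp: lu_estimators_def)
qed

lemma tendsto_C_full_dsum_eps:
  fixes \<rho> :: "real^('m::finite + 'k::finite) \<Rightarrow> complex^'d::finite^'d" and W :: "real^'m^'m"
  assumes \<rho>: "psd (\<rho> \<theta>)" and nonempty: "lu_estimators \<rho> \<theta> id \<noteq> {}" and W: "pos_def_sym W"
  shows "((\<lambda>\<epsilon>. C_full \<rho> \<theta> (dsum_eps W \<epsilon>)) \<longlongrightarrow> C_I_E \<rho> \<theta> W) (at_right 0)"
proof -
  define fE where "fE = (\<lambda>(X, P, est). rtrace_prod W (\<chi> i j. mse \<rho> \<theta> id X P est $ Inl i $ Inl j))"
  define h where "h = (\<lambda>(X, P, est). \<Sum>j\<in>UNIV. mse \<rho> \<theta> id X P est $ Inr j $ Inr j)"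
  have "0 \<le> fE e" "0 \<le> h e" if "e \<in> lu_estimators \<rho> \<theta> id" for e
    using that locally_unbiased_rtrace_mse_block_nonneg[of \<rho> \<theta>, OF \<rho> W] locally_unbiased_prob_nonneg[of \<rho> \<theta>, OF \<rho>]
    unfolding fE_def h_def lu_estimators_def by (auto intro!: sum_nonneg mse_diag_nonneg)
  then have "((\<lambda>\<epsilon>. INF e\<in>lu_estimators \<rho> \<theta> id. fE e + \<epsilon> * h e) \<longlongrightarrow>
      (INF e\<in>lu_estimators \<rho> \<theta> id. fE e)) (at_right 0)"
    using nonempty by (intro tendsto_INF_add_scaled bdd_belowI2[where m = 0]) auto
  moreover have "C_full \<rho> \<theta> (dsum_eps W \<epsilon>) = (INF e\<in>lu_estimators \<rho> \<theta> id. fE e + \<epsilon> * h e)" for \<epsilon>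
    unfolding C_full_eq_INF rtrace_prod_dsum_eps fE_def h_def by (simp add: case_prod_beta)
  ultimately show ?thesis unfolding C_I_E_eq_INF fE_def by simp
qed

theorem theorem1:
  fixes \<Theta> :: "(real^('m::finite + 'k::finite)) set"
    and \<rho> :: "real^('m + 'k) \<Rightarrow> complex^'d::finite^'d"
    and \<theta> :: "real^('m + 'k)"
    and W :: "real^'m^'m"
  assumes "regular_model \<Theta> \<rho>"
    and "\<theta> \<in> \<Theta>"
    and "\<exists>X P. regular_povm_at \<rho> \<theta> X P"
    and "pos_def_sym W"
  shows "C_I \<rho> \<theta> W = C_I_E \<rho> \<theta> W
       \<and> ((\<lambda>\<epsilon>. C_full \<rho> \<theta> (dsum_eps W \<epsilon>)) \<longlongrightarrow> C_I \<rho> \<theta> W) (at_right 0)"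
proof -
  obtain X P where "regular_povm_at \<rho> \<theta> X P" using assms(3) by blast
  then obtain est where "locally_unbiased \<rho> \<theta> id X P est"
    using exists_locally_unbiased assms(1,2) by blast
  then have nonempty: "lu_estimators \<rho> \<theta> id \<noteq> {}" unfolding lu_estimators_def by auto
  have "psd (\<rho> \<theta>)"
    using regular_model_density_matrix[OF assms(1,2)] unfolding density_matrix_def by simp
  then show ?thesis
    using C_I_le_C_I_E C_I_E_le_C_I tendsto_C_full_dsum_eps nonempty assms(4) by (metis order_antisym)
qed

end
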